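(* Let $\epsilon\in(0,1]$ and $\mathcal{A}(\epsilon)=\{0,\epsilon,2\epsilon,\dots,\lfloor 1/\epsilon\rfloor\epsilon,1\}$. Let $f(p)=R(p,\alpha p,\hat{\mathcal{M}}^\ast(p,\alpha p))$ for $p\in[0,1]$, and assume $f$ is $\beta$-Lipschitz on $[0,1]$. Let $p_{\mathrm{DS}}^\ast$ be a maximizer of $f$ over $\mathcal{A}(\epsilon)$ and $q_{\mathrm{DS}}^\ast=\alpha p_{\mathrm{DS}}^\ast$. Let $(p^\ast,q^\ast,\mathcal{M}^\ast)$ be an optimal solution of Problem 1 (assumed to exist). Then $$R(p_{\mathrm{DS}}^\ast,q_{\mathrm{DS}}^\ast,\hat{\mathcal{M}}^\ast(p_{\mathrm{DS}}^\ast,q_{\mathrm{DS}}^\ast))\ \ge\ \Big(1-\frac1e\Big)R(p^\ast,q^\ast,\mathcal{M}^\ast)-\beta\epsilon.$$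
   Context: Let $\mathcal{G}=(\mathcal{U},\mathcal{E})$ be a finite directed graph without self-loops, $\mathcal{U}=\{1,\dots,U\}$. For $u,v\in\mathcal{U}$, $D(u,v;\mathcal{G})$ denotes the number of edges of a shortest directed path from $u$ to $v$ in $\mathcal{G}$, with $D(u,v;\mathcal{G})=+\infty$ if there is no such path. For an integer $d\ge0$, the $d$-visible set of $u$ is $\mathcal{V}(u,d;\mathcal{G})=\{v\in\mathcal{U}: D(v,u;\mathcal{G})\le d\}$. Fix an integer social visibility threshold $\tau\ge1$. Let $\mathcal{R}\subseteq\mathcal{U}$ (requesters) and $\mathcal{S}\subseteq\mathcal{U}$ (suppliers) be disjoint. Each requester $u\in\mathcal{R}$ has a valuation $p_u\in[0,1]$ and each supplier $u\in\mathcal{S}$ has a valuation $q_u\in[0,1]$. Let $b$ be a positive integer (budget) and $\alpha\in(0,1)$. For $p\in[0,1]$ let $\widetilde{R}(p)=\{u\in\mathcal{R}: p_u\ge p\}$ and for $q\in[0,1]$ let $\widetilde{S}(q)=\{u\in\mathcal{S}: q_u\le q\}$. For $\mathcal{M}\subseteq\mathcal{S}$ let $\widetilde{G}(p,\mathcal{M})$ be the graph obtained from $\mathcal{G}$ by adding a directed edge from every $s\in\mathcal{M}$ to every $r\in\widetilde{R}(p)$. For $u\in\widetilde{R}(p)$ let $I_u(p,\mathcal{M})=|\mathcal{V}(u,\tau;\widetilde{G}(p,\mathcal{M}))\setminus\mathcal{V}(u,\tau;\mathcal{G})|$, and $I(p,\mathcal{M})=\sum_{u\in\widetilde{R}(p)}I_u(p,\mathcal{M})$.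 The revenue is $R(p,q,\mathcal{M})=p\,I(p,\mathcal{M})-q\,I(p,\mathcal{M})$. Problem 1: maximize $R(p,q,\mathcal{M})$ over $p,q\in[0,1]$ and $\mathcal{M}$ subject to $q=\alpha p$, $\mathcal{M}\subseteq\widetilde{S}(q)$, $|\mathcal{M}|\le b$. The greedy procedure \texttt{OptSupplierSet}$(p,q)$: start with $\mathcal{M}=\emptyset$; for $t=1,\dots,b$, pick $u^\ast\in\widetilde{S}(q)$ maximizing $R(p,q,\mathcal{M}\cup\{u\})-R(p,q,\mathcal{M})$ (ties broken arbitrarily) and set $\mathcal{M}\leftarrow\mathcal{M}\cup\{u^\ast\}$; output $\hat{\mathcal{M}}^\ast(p,q)=\mathcal{M}$. *)

theory Defs
  imports "HOL-Analysis.Analysis" "HOL-Library.Extended_Nat"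
begin

definition sp_dist :: "(nat \<times> nat) set \<Rightarrow> nat \<Rightarrow> nat \<Rightarrow> enat" where
  "sp_dist E u v = (if \<exists>n. (u, v) \<in> E ^^ n then enat (LEAST n. (u, v) \<in> E ^^ n) else \<infinity>)"

definition visible :: "nat \<Rightarrow> (nat \<times> nat) set \<Rightarrow> nat \<Rightarrow> nat \<Rightarrow> nat set" where
  "visible U E u d = {v \<in> {1..U}. sp_dist E v u \<le> enat d}"

definition Rtil :: "nat set \<Rightarrow> (nat \<Rightarrow> real) \<Rightarrow> real \<Rightarrow> nat set" where
  "Rtil Rset pv p = {u \<in> Rset. pv u \<ge> p}"

definition Stil :: "nat set \<Rightarrow> (nat \<Rightarrow> real) \<Rightarrow> real \<Rightarrow> nat set" where
  "Stil Sset qv q = {u \<in> Sset. qv u \<le> q}"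

definition aug_graph :: "(nat \<times> nat) set \<Rightarrow> nat set \<Rightarrow> (nat \<Rightarrow> real) \<Rightarrow> real \<Rightarrow> nat set \<Rightarrow> (nat \<times> nat) set" where
  "aug_graph E Rset pv p M = E \<union> (M \<times> Rtil Rset pv p)"

definition infl_u :: "nat \<Rightarrow> (nat \<times> nat) set \<Rightarrow> nat \<Rightarrow> nat set \<Rightarrow> (nat \<Rightarrow> real) \<Rightarrow> real \<Rightarrow> nat set \<Rightarrow> nat \<Rightarrow> nat" where
  "infl_u U E \<tau> Rset pv p M u =
     card (visible U (aug_graph E Rset pv p M) u \<tau> - visible U E u \<tau>)"

definition infl :: "nat \<Rightarrow> (nat \<times> nat) set \<Rightarrow> nat \<Rightarrow> nat set \<Rightarrow> (nat \<Rightarrow> real) \<Rightarrow> real \<Rightarrow> nat set \<Rightarrow> nat" where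
  "infl U E \<tau> Rset pv p M = (\<Sum>u\<in>Rtil Rset pv p. infl_u U E \<tau> Rset pv p M u)"

definition revenue :: "nat \<Rightarrow> (nat \<times> nat) set \<Rightarrow> nat \<Rightarrow> nat set \<Rightarrow> (nat \<Rightarrow> real) \<Rightarrow> real \<Rightarrow> real \<Rightarrow> nat set \<Rightarrow> real" where
  "revenue U E \<tau> Rset pv p q M =
     p * real (infl U E \<tau> Rset pv p M) - q * real (infl U E \<tau> Rset pv p M)"

(* M is a possible output of the greedy procedure OptSupplierSet(p,q) for some tie-breaking:
   there is a sequence us of b picks, each in Stil(q) and maximizing the marginal revenue
   w.r.t. the set of previous picks; the output is the set of picks.
   If Stil(q) is empty, nothing can be picked and the output is the empty set. *)
definition greedy_output :: "nat \<Rightarrow> (nat \<times> nat) set \<Rightarrow> nat \<Rightarrow> nat set \<Rightarrow> nat set \<Rightarrow>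
    (nat \<Rightarrow> real) \<Rightarrow> (nat \<Rightarrow> real) \<Rightarrow> nat \<Rightarrow> real \<Rightarrow> real \<Rightarrow> nat set \<Rightarrow> bool" where
  "greedy_output U E \<tau> Rset Sset pv qv b p q M \<longleftrightarrow>
     (Stil Sset qv q = {} \<and> M = {}) \<or>
     (\<exists>us :: nat list. length us = b \<and> M = set us \<and>
        (\<forall>t<b. us ! t \<in> Stil Sset qv q \<and>
           (\<forall>u\<in>Stil Sset qv q.
              revenue U E \<tau> Rset pv p q (insert u (set (take t us))) - revenue U E \<tau> Rset pv p q (set (take t us))
              \<le> revenue U E \<tau> Rset pv p q (insert (us ! t) (set (take t us))) - revenue U E \<tau> Rset pv p q (set (take t us)))))"

definition feasible1 :: "nat set \<Rightarrow> (nat \<Rightarrow> real) \<Rightarrow> nat \<Rightarrow> real \<Rightarrow> real \<Rightarrow> real \<Rightarrow> nat set \<Rightarrow> bool" where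
  "feasible1 Sset qv b \<alpha> p q M \<longleftrightarrow>
     p \<in> {0..1} \<and> q \<in> {0..1} \<and> q = \<alpha> * p \<and> M \<subseteq> Stil Sset qv q \<and> card M \<le> b"

definition grid :: "real \<Rightarrow> real set" where
  "grid \<epsilon> = {real k * \<epsilon> | k. k \<le> nat \<lfloor>1 / \<epsilon>\<rfloor>} \<union> {1}"

end

theory Submission
  imports Defs
begin

(* For a fixed price the revenue is a nonnegative multiple of the influence, and the
   influence is a monotone set function of the supplier set that is bounded by the sum of its
   marginal gains (a newly visible user is reached through one of the added supplier edges, hence
   already through that single supplier).  The standard greedy argument then shows that the gap to
   the optimum shrinks by a factor 1 - 1/b per pick, so after b picks it is at most
   (1 - 1/b)^b \<le> 1/e of the optimum.  Finally the optimal price rounded down to the grid loses at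
   most \<beta>\<epsilon> by the Lipschitz assumption, and the grid maximizer is at least as good. *)

lemma relpow_mono:
  fixes R S :: "('a \<times> 'a) set"
  shows "R \<subseteq> S \<Longrightarrow> R ^^ n \<subseteq> S ^^ n"
  by (induction n) (simp_all add: relcomp_mono)

lemma sp_dist_le_enat_iff: "sp_dist E v u \<le> enat d \<longleftrightarrow> (\<exists>n\<le>d. (v, u) \<in> E ^^ n)"
proof
  assume "sp_dist E v u \<le> enat d"
  then have "\<exists>n. (v, u) \<in> E ^^ n" and "(LEAST n. (v, u) \<in> E ^^ n) \<le> d"
    by (auto simp: sp_dist_def split: if_splits)
  then show "\<exists>n\<le>d. (v, u) \<in> E ^^ n" by (meson LeastI_ex)
next
  assume "\<exists>n\<le>d. (v, u) \<in> E ^^ n"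
  then show "sp_dist E v u \<le> enat d"
    by (auto simp: sp_dist_def intro: le_trans[OF Least_le])
qed

lemma visible_mono: "E \<subseteq> E' \<Longrightarrow> visible U E u d \<subseteq> visible U E' u d"
  unfolding visible_def sp_dist_le_enat_iff using relpow_mono by blast

lemma relpow_Un_Times_cases:
  "(v, u) \<in> (E \<union> M \<times> R) ^^ n \<Longrightarrow> (v, u) \<in> E ^^ n \<or>
     (\<exists>s\<in>M. \<exists>r\<in>R. \<exists>a c. a + 1 + c \<le> n \<and> (v, s) \<in> E ^^ a \<and> (r, u) \<in> E ^^ c)"
proof (induction n arbitrary: u)
  case 0
  then show ?case by auto
next
  case (Suc n)
  from Suc.prems obtain w where vw: "(v, w) \<in> (E \<union> M \<times> R) ^^ n" and wu: "(w, u) \<in> E \<union> M \<times> R"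
    by (auto elim: relpow_Suc_E)
  from Suc.IH[OF vw] show ?case
  proof
    assume vw': "(v, w) \<in> E ^^ n"
    show ?case
    proof (cases "(w, u) \<in> E")
      case True
      then show ?thesis using vw' by (blast intro: relpow_Suc_I)
    next
      case False
      then have "w \<in> M" "u \<in> R" using wu by auto
      then show ?thesis using vw' by (intro disjI2 bexI exI[of _ n] exI[of _ 0]) auto
    qed
  next
    assume "\<exists>s\<in>M. \<exists>r\<in>R. \<exists>a c. a + 1 + c \<le> n \<and> (v, s) \<in> E ^^ a \<and> (r, w) \<in> E ^^ c"
    then obtain s r a c where h: "s \<in> M" "r \<in> R" "a + 1 + c \<le> n" "(v, s) \<in> E ^^ a" "(r, w) \<in> E ^^ c"
      by blast
    show ?case
    proof (cases "(w, u) \<in> E")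
      case True
      then show ?thesis using h
        by (intro disjI2 bexI[of _ s] bexI[of _ r] exI[of _ a] exI[of _ "Suc c"]) (auto intro: relpow_Suc_I)
    next
      case False
      then have "u \<in> R" using wu by auto
      then show ?thesis using h by (intro disjI2 bexI[of _ s] bexI[of _ u] exI[of _ a] exI[of _ 0]) auto
    qed
  qed
qed

lemma visible_Un_Times_subset:
  "visible U (E \<union> M \<times> R) u d \<subseteq> visible U E u d \<union> (\<Union>s\<in>M. visible U (E \<union> {s} \<times> R) u d)"
proof
  fix v assume "v \<in> visible U (E \<union> M \<times> R) u d"
  then obtain n where v: "v \<in> {1..U}" "n \<le> d" "(v, u) \<in> (E \<union> M \<times> R) ^^ n"
    unfolding visible_def sp_dist_le_enat_iff by auto
  from relpow_Un_Times_cases[OF v(3)]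
  show "v \<in> visible U E u d \<union> (\<Union>s\<in>M. visible U (E \<union> {s} \<times> R) u d)"
  proof
    assume "(v, u) \<in> E ^^ n"
    then show ?thesis using v unfolding visible_def sp_dist_le_enat_iff by auto
  next
    assume "\<exists>s\<in>M. \<exists>r\<in>R. \<exists>a c. a + 1 + c \<le> n \<and> (v, s) \<in> E ^^ a \<and> (r, u) \<in> E ^^ c"
    then obtain s r a c
      where h: "s \<in> M" "r \<in> R" "a + 1 + c \<le> n" "(v, s) \<in> E ^^ a" "(r, u) \<in> E ^^ c"
      by blast
    let ?A = "E \<union> {s} \<times> R"
    have "(v, s) \<in> ?A ^^ a" "(r, u) \<in> ?A ^^ c"
      using h(4,5) relpow_mono[of E ?A] by blast+
    then have "(v, u) \<in> ?A ^^ (Suc a + c)"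
      using h(2) by (blast intro: relpow_Suc_I relpow_trans)
    then have "v \<in> visible U ?A u d"
      using v h(3) unfolding visible_def sp_dist_le_enat_iff by (auto intro!: exI[of _ "Suc a + c"])
    then show ?thesis using h(1) by blast
  qed
qed

definition gained_visible ::
    "nat \<Rightarrow> (nat \<times> nat) set \<Rightarrow> nat \<Rightarrow> nat set \<Rightarrow> (nat \<Rightarrow> real) \<Rightarrow> real \<Rightarrow> nat set \<Rightarrow> nat \<Rightarrow> nat set"
  where "gained_visible U E \<tau> Rset pv p M u =
    visible U (aug_graph E Rset pv p M) u \<tau> - visible U E u \<tau>"

lemma finite_gained_visible: "finite (gained_visible U E \<tau> Rset pv p M u)"
  unfolding gained_visible_def visible_def by (rule finite_subset[of _ "{1..U}"]) auto

lemma gained_visible_mono: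
  "A \<subseteq> B \<Longrightarrow> gained_visible U E \<tau> Rset pv p A u \<subseteq> gained_visible U E \<tau> Rset pv p B u"
  unfolding gained_visible_def aug_graph_def
  using visible_mono[of "E \<union> A \<times> Rtil Rset pv p" "E \<union> B \<times> Rtil Rset pv p"] by blast

lemma gained_visible_subset_marginals:
  "gained_visible U E \<tau> Rset pv p M u \<subseteq> gained_visible U E \<tau> Rset pv p S u \<union>
     (\<Union>z\<in>M. gained_visible U E \<tau> Rset pv p (insert z S) u - gained_visible U E \<tau> Rset pv p S u)"
proof
  let ?N = "gained_visible U E \<tau> Rset pv p"
  fix v assume "v \<in> ?N M u"
  then have v1: "v \<in> visible U (E \<union> M \<times> Rtil Rset pv p) u \<tau>" and v2: "v \<notin> visible U E u \<tau>"
    unfolding gained_visible_def aug_graph_def by auto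
  from v1 v2 visible_Un_Times_subset[of U E M "Rtil Rset pv p" u \<tau>]
  obtain z where z: "z \<in> M" "v \<in> visible U (E \<union> {z} \<times> Rtil Rset pv p) u \<tau>"
    by blast
  then have "v \<in> ?N {z} u"
    using v2 unfolding gained_visible_def aug_graph_def by simp
  then have "v \<in> ?N (insert z S) u"
    using gained_visible_mono[of "{z}" "insert z S"] by blast
  with z(1) show "v \<in> ?N S u \<union> (\<Union>z\<in>M. ?N (insert z S) u - ?N S u)" by blast
qed

lemma infl_eq_sum_card_gained_visible:
  "real (infl U E \<tau> Rset pv p M) = (\<Sum>u\<in>Rtil Rset pv p. real (card (gained_visible U E \<tau> Rset pv p M u)))"
  by (simp add: infl_def infl_u_def gained_visible_def)

lemma infl_mono: "A \<subseteq> B \<Longrightarrow> infl U E \<tau> Rset pv p A \<le> infl U E \<tau> Rset pv p B"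
  unfolding infl_def infl_u_def
  by (intro sum_mono card_mono)
    (use finite_gained_visible gained_visible_mono in \<open>auto simp: gained_visible_def\<close>)

lemma infl_empty: "infl U E \<tau> Rset pv p {} = 0"
  by (simp add: infl_def infl_u_def aug_graph_def)

lemma infl_le_marginals:
  assumes "finite M"
  shows "real (infl U E \<tau> Rset pv p M) \<le> real (infl U E \<tau> Rset pv p S)
     + (\<Sum>z\<in>M. real (infl U E \<tau> Rset pv p (insert z S)) - real (infl U E \<tau> Rset pv p S))"
proof -
  let ?N = "gained_visible U E \<tau> Rset pv p"
  have card_diff: "real (card (?N (insert z S) u - ?N S u)) = real (card (?N (insert z S) u)) - real (card (?N S u))"
    for z u
    by (simp add: card_Diff_subset finite_gained_visible gained_visible_mono subset_insertI
        of_nat_diff card_mono)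
  have per_user: "real (card (?N M u)) \<le> real (card (?N S u)) +
     (\<Sum>z\<in>M. real (card (?N (insert z S) u)) - real (card (?N S u)))" for u
  proof -
    have "card (?N M u) \<le> card (?N S u \<union> (\<Union>z\<in>M. ?N (insert z S) u - ?N S u))"
      by (rule card_mono[OF _ gained_visible_subset_marginals]) (simp add: finite_gained_visible assms)
    also have "\<dots> \<le> card (?N S u) + (\<Sum>z\<in>M. card (?N (insert z S) u - ?N S u))"
      using card_Un_le card_UN_le[OF assms] add_left_mono order_trans by blast
    finally have "real (card (?N M u)) \<le> real (card (?N S u)) + (\<Sum>z\<in>M. real (card (?N (insert z S) u - ?N S u)))"
      by (simp flip: of_nat_sum of_nat_add)
    then show ?thesis by (simp only: card_diff)
  qed
  have "real (infl U E \<tau> Rset pv p M) \<le> (\<Sum>u\<in>Rtil Rset pv p. real (card (?N S u)) +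
     (\<Sum>z\<in>M. real (card (?N (insert z S) u)) - real (card (?N S u))))"
    unfolding infl_eq_sum_card_gained_visible by (rule sum_mono) (rule per_user)
  also have "\<dots> = real (infl U E \<tau> Rset pv p S)
     + (\<Sum>z\<in>M. real (infl U E \<tau> Rset pv p (insert z S)) - real (infl U E \<tau> Rset pv p S))"
    unfolding infl_eq_sum_card_gained_visible sum.distrib sum_subtractf
    by (subst sum.swap) (simp add: sum_distrib_left)
  finally show ?thesis .
qed

lemma revenue_eq: "revenue U E \<tau> Rset pv p q M = (p - q) * real (infl U E \<tau> Rset pv p M)"
  by (simp add: revenue_def algebra_simps)

lemma greedy_gap_step:
  fixes G :: "'a set \<Rightarrow> real"
  assumes mono: "\<And>A B. A \<subseteq> B \<Longrightarrow> G A \<le> G B"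
    and marginals: "G M \<le> G S + (\<Sum>z\<in>M. G (insert z S) - G S)"
    and "M \<subseteq> C" and "card M \<le> b" and "b > 0"
    and best: "\<And>z. z \<in> C \<Longrightarrow> G (insert z S) - G S \<le> G (insert x S) - G S"
  shows "G M - G (insert x S) \<le> (1 - 1 / real b) * (G M - G S)"
proof -
  define \<delta> where "\<delta> = G (insert x S) - G S"
  have "0 \<le> \<delta>" using mono[of S "insert x S"] by (auto simp: \<delta>_def)
  have "G M - G S \<le> (\<Sum>z\<in>M. \<delta>)"
    using marginals sum_mono[of M "\<lambda>z. G (insert z S) - G S" "\<lambda>_. \<delta>"] best \<open>M \<subseteq> C\<close>
    by (force simp: \<delta>_def)
  also have "\<dots> \<le> real b * \<delta>"
    using \<open>card M \<le> b\<close> \<open>0 \<le> \<delta>\<close> by (simp add: mult_right_mono)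
  finally show ?thesis using \<open>b > 0\<close> by (simp add: \<delta>_def field_simps)
qed

lemma one_minus_inverse_power_le: "b > 0 \<Longrightarrow> (1 - 1 / real b) ^ b \<le> 1 / exp 1"
proof -
  assume "b > 0"
  have "(1 - 1 / real b) ^ b \<le> exp (- 1 / real b) ^ b"
    using \<open>b > 0\<close> exp_ge_add_one_self[of "- 1 / real b"] by (intro power_mono) auto
  also have "\<dots> = exp (- 1)"
    using \<open>b > 0\<close> by (simp flip: exp_of_nat_mult)
  finally show ?thesis by (simp add: exp_minus field_simps)
qed

lemma greedy_approximation:
  fixes G :: "'a set \<Rightarrow> real" and us :: "'a list"
  assumes mono: "\<And>A B. A \<subseteq> B \<Longrightarrow> G A \<le> G B"
    and marginals: "\<And>S. G M \<le> G S + (\<Sum>z\<in>M. G (insert z S) - G S)"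
    and "0 \<le> G {}" and "M \<subseteq> C" and "card M \<le> b" and "b > 0" and "length us = b"
    and greedy: "\<And>t. t < b \<Longrightarrow> \<forall>z\<in>C. G (insert z (set (take t us))) - G (set (take t us))
                    \<le> G (insert (us ! t) (set (take t us))) - G (set (take t us))"
  shows "(1 - 1 / exp 1) * G M \<le> G (set us)"
proof -
  define \<rho> where "\<rho> = 1 - 1 / real b"
  have "0 \<le> \<rho>" using \<open>b > 0\<close> by (simp add: \<rho>_def)
  have gap: "G M - G (set (take t us)) \<le> \<rho> ^ t * (G M - G {})" if "t \<le> b" for t
    using that
  proof (induction t)
    case 0 then show ?case by simp
  next
    case (Suc t)
    have "set (take (Suc t) us) = insert (us ! t) (set (take t us))"
      using Suc.prems \<open>length us = b\<close> by (simp add: take_Suc_conv_app_nth)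
    then have "G M - G (set (take (Suc t) us)) \<le> \<rho> * (G M - G (set (take t us)))"
      unfolding \<rho>_def using Suc.prems greedy
      by (auto intro!: greedy_gap_step[OF mono marginals \<open>M \<subseteq> C\<close> \<open>card M \<le> b\<close> \<open>b > 0\<close>])
    also have "\<dots> \<le> \<rho> * (\<rho> ^ t * (G M - G {}))"
      using Suc \<open>0 \<le> \<rho>\<close> by (intro mult_left_mono) auto
    finally show ?case by simp
  qed
  have "0 \<le> G M - G {}" using mono[of "{}" M] by simp
  have "G M - G (set us) \<le> \<rho> ^ b * (G M - G {})"
    using gap[of b] \<open>length us = b\<close> by simp
  also have "\<dots> \<le> 1 / exp 1 * (G M - G {})"
    using one_minus_inverse_power_le[OF \<open>b > 0\<close>] \<open>0 \<le> G M - G {}\<close>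
    by (intro mult_right_mono) (auto simp: \<rho>_def)
  also have "\<dots> \<le> 1 / exp 1 * G M"
    using \<open>0 \<le> G {}\<close> by (simp add: field_simps)
  finally show ?thesis by (simp add: algebra_simps)
qed

lemma revenue_greedy_ge:
  assumes greedy: "greedy_output U E \<tau> Rset Sset pv qv b p (\<alpha> * p) M"
    and feas: "feasible1 Sset qv b \<alpha> p q M'"
    and "finite Sset" and "b > 0" and "\<alpha> \<le> 1"
  shows "(1 - 1 / exp 1) * revenue U E \<tau> Rset pv p q M' \<le> revenue U E \<tau> Rset pv p (\<alpha> * p) M"
proof -
  from feas have "p \<in> {0..1}" and q: "q = \<alpha> * p" and M': "M' \<subseteq> Stil Sset qv q" "card M' \<le> b"
    by (auto simp: feasible1_def)
  define c where "c = p - \<alpha> * p"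
  define G where "G M = revenue U E \<tau> Rset pv p (\<alpha> * p) M" for M
  have G_eq: "G M = c * real (infl U E \<tau> Rset pv p M)" for M
    by (simp add: G_def c_def revenue_eq)
  have "0 \<le> (1 - \<alpha>) * p"
    using \<open>p \<in> {0..1}\<close> \<open>\<alpha> \<le> 1\<close> by simp
  then have "0 \<le> c" by (simp add: c_def algebra_simps)
  have "finite M'"
    using M'(1) \<open>finite Sset\<close> by (auto simp: Stil_def intro: finite_subset)
  from greedy consider
      "Stil Sset qv (\<alpha> * p) = {}" "M = {}"
    | us where "length us = b" "M = set us"
        "\<forall>t<b. us ! t \<in> Stil Sset qv (\<alpha> * p) \<and>
           (\<forall>z\<in>Stil Sset qv (\<alpha> * p). G (insert z (set (take t us))) - G (set (take t us))
              \<le> G (insert (us ! t) (set (take t us))) - G (set (take t us)))"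
    unfolding greedy_output_def G_def by blast
  then show ?thesis
  proof cases
    case 1
    then show ?thesis using M' q by (simp add: revenue_eq infl_empty)
  next
    case 2
    have "(1 - 1 / exp 1) * G M' \<le> G (set us)"
    proof (rule greedy_approximation[where C = "Stil Sset qv (\<alpha> * p)" and b = b])
      show "G A \<le> G B" if "A \<subseteq> B" for A B
        using infl_mono[OF that] \<open>0 \<le> c\<close> by (simp add: G_eq mult_left_mono)
      show "G M' \<le> G S + (\<Sum>z\<in>M'. G (insert z S) - G S)" for S
        using mult_left_mono[OF infl_le_marginals[OF \<open>finite M'\<close>] \<open>0 \<le> c\<close>]
        by (simp add: G_eq algebra_simps sum_distrib_left sum_subtractf)
    qed (use M' q \<open>b > 0\<close> 2 in \<open>auto simp: G_eq infl_empty\<close>)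
    then show ?thesis using 2 q by (simp add: G_def)
  qed
qed

lemma grid_round_down:
  assumes "0 < \<epsilon>" and "p \<in> {0..1}"
  shows "\<exists>g\<in>grid \<epsilon>. g \<in> {0..1} \<and> \<bar>p - g\<bar> \<le> \<epsilon>"
proof -
  define k where "k = nat \<lfloor>p / \<epsilon>\<rfloor>"
  have "0 \<le> p / \<epsilon>" using assms by simp
  then have k: "real k \<le> p / \<epsilon>" "p / \<epsilon> < real k + 1" by (simp_all add: k_def)
  have "p / \<epsilon> \<le> 1 / \<epsilon>" using assms by (simp add: divide_right_mono)
  then have "k \<le> nat \<lfloor>1 / \<epsilon>\<rfloor>" unfolding k_def by (intro nat_mono floor_mono)
  then have "real k * \<epsilon> \<in> grid \<epsilon>" by (auto simp: grid_def)
  moreover have "real k * \<epsilon> \<le> p" "p - real k * \<epsilon> < \<epsilon>"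
    using k \<open>0 < \<epsilon>\<close> by (simp_all add: field_simps)
  ultimately show ?thesis using assms by (intro bexI[of _ "real k * \<epsilon>"]) auto
qed

lemma grid_maximizer_ge:
  assumes "lipschitz_on \<beta> {0..1} f" and "0 < \<epsilon>"
    and max: "\<forall>g\<in>grid \<epsilon>. f g \<le> f p0" and "p \<in> {0..1}"
  shows "f p - \<beta> * \<epsilon> \<le> f p0"
proof -
  obtain g where g: "g \<in> grid \<epsilon>" "g \<in> {0..1}" "\<bar>p - g\<bar> \<le> \<epsilon>"
    using grid_round_down[OF \<open>0 < \<epsilon>\<close> \<open>p \<in> {0..1}\<close>] by blast
  have "\<bar>f p - f g\<bar> \<le> \<beta> * \<bar>p - g\<bar>"
    using lipschitz_onD[OF assms(1) \<open>p \<in> {0..1}\<close> g(2)] by (simp add: dist_real_def)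
  also have "\<dots> \<le> \<beta> * \<epsilon>"
    using g(3) lipschitz_on_nonneg[OF assms(1)] by (simp add: mult_left_mono)
  finally show ?thesis using max g(1) by auto
qed

theorem mainTheorem6:
  fixes U :: nat and E :: "(nat \<times> nat) set" and \<tau> :: nat
    and Rset Sset :: "nat set" and pv qv :: "nat \<Rightarrow> real"
    and b :: nat and \<alpha> \<beta> \<epsilon> :: real
    and Mhat :: "real \<Rightarrow> real \<Rightarrow> nat set"
    and pDS pstar qstar :: real and Mstar :: "nat set"
  assumes E_sub: "E \<subseteq> {1..U} \<times> {1..U}"
    and no_loops: "\<forall>u. (u, u) \<notin> E"
    and tau: "\<tau> \<ge> 1"
    and Req_sub: "Rset \<subseteq> {1..U}" and Sup_sub: "Sset \<subseteq> {1..U}"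
    and disj: "Rset \<inter> Sset = {}"
    and pv_range: "\<forall>u\<in>Rset. pv u \<in> {0..1}"
    and qv_range: "\<forall>u\<in>Sset. qv u \<in> {0..1}"
    and b_pos: "b > 0"
    and alpha: "0 < \<alpha>" "\<alpha> < 1"
    and eps: "0 < \<epsilon>" "\<epsilon> \<le> 1"
    and greedy: "\<forall>p\<in>{0..1}. greedy_output U E \<tau> Rset Sset pv qv b p (\<alpha> * p) (Mhat p (\<alpha> * p))"
    and lip: "lipschitz_on \<beta> {0..1} (\<lambda>p. revenue U E \<tau> Rset pv p (\<alpha> * p) (Mhat p (\<alpha> * p)))"
    and pDS_in: "pDS \<in> grid \<epsilon>"
    and pDS_max: "\<forall>p\<in>grid \<epsilon>. revenue U E \<tau> Rset pv p (\<alpha> * p) (Mhat p (\<alpha> * p))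
                     \<le> revenue U E \<tau> Rset pv pDS (\<alpha> * pDS) (Mhat pDS (\<alpha> * pDS))"
    and opt_feas: "feasible1 Sset qv b \<alpha> pstar qstar Mstar"
    and opt: "\<forall>p q M. feasible1 Sset qv b \<alpha> p q M \<longrightarrow>
                revenue U E \<tau> Rset pv p q M \<le> revenue U E \<tau> Rset pv pstar qstar Mstar"
  shows "revenue U E \<tau> Rset pv pDS (\<alpha> * pDS) (Mhat pDS (\<alpha> * pDS))
           \<ge> (1 - 1 / exp 1) * revenue U E \<tau> Rset pv pstar qstar Mstar - \<beta> * \<epsilon>"
proof -
  define f where "f p = revenue U E \<tau> Rset pv p (\<alpha> * p) (Mhat p (\<alpha> * p))" for p
  have "pstar \<in> {0..1}" using opt_feas by (simp add: feasible1_def)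
  have "finite Sset" using Sup_sub by (rule finite_subset) simp
  have "(1 - 1 / exp 1) * revenue U E \<tau> Rset pv pstar qstar Mstar \<le> f pstar"
    unfolding f_def using greedy \<open>pstar \<in> {0..1}\<close> opt_feas \<open>finite Sset\<close> b_pos alpha
    by (intro revenue_greedy_ge) auto
  moreover have "f pstar - \<beta> * \<epsilon> \<le> f pDS"
    using lip pDS_max \<open>pstar \<in> {0..1}\<close> eps(1) unfolding f_def by (intro grid_maximizer_ge) auto
  ultimately show ?thesis by (simp add: f_def)
qed

end
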